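(* For every multi-type resource allocation problem and every profile $R$ of strict linear orders over bundles, the assignment $\mathrm{MPS}(R)$ is lexi-efficient.
   Context: Setting: $N=\{1,\dots,n\}$ agents; $M=D_1\cup\dots\cup D_p$ items with pairwise disjoint types, $|D_i|=n$, unit supply; bundles $\mathcal D=D_1\times\dots\times D_p$; each agent $j$ has a strict linear order $\succ_j$ on $\mathcal D$. An assignment is an $n\times|\mathcal D|$ matrix $(p_{j,x})$ with entries in $[0,1]$, rows summing to $1$, and $\sum_j\sum_{x\ni o}p_{j,x}=1$ for every item $o$. Lexicographic dominance: allocation $p$ lexicographically dominates $q$ w.r.t. $\succ$ if there is a bundle $x$ with $p_x>q_x$ and $p_y\ge q_y$ for all $y\succ x$. $P$ is lexi-efficient if there is no assignment $Q$ such that $Q_j$ lexicographically dominates $P_j$ w.r.t. $\succ_j$ for every agent $j$. MPS (multi-type probabilistic serial): items start with supply $1$. A bundle is available if all its items have positive remaining supply. Continuously in time, each agent eats her $\succ_j$-most-preferred available bundle at rate $1$, which means each item of that bundle is consumed at rate $1$ by her and $p_{j,x}$ grows at rate $1$; when an item's supply reaches $0$, it is exhausted and every bundle containing it becomes unavailable, and agents switch to their next most preferred available bundle. The process ends when all items are exhausted (at time $1$); the accumulated matrix $(p_{j,x})$ is $\mathrm{MPS}(R)$. *)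

theory Defs
  imports Complex_Main
begin

text \<open>Bundles: lists x of length p with x!i in D i (item of type i+1, indices 0..p-1). Preferences: pr j x y means x is
  strictly preferred to y by agent j.\<close>

definition bundles :: "nat \<Rightarrow> (nat \<Rightarrow> 'o set) \<Rightarrow> 'o list set" where
  "bundles p D = {x. length x = p \<and> (\<forall>i<p. x ! i \<in> D i)}"

definition strict_linear_order_on :: "'b set \<Rightarrow> ('b \<Rightarrow> 'b \<Rightarrow> bool) \<Rightarrow> bool" where
  "strict_linear_order_on B r \<longleftrightarrow>
     (\<forall>x\<in>B. \<not> r x x) \<and>
     (\<forall>x\<in>B. \<forall>y\<in>B. \<forall>z\<in>B. r x y \<longrightarrow> r y z \<longrightarrow> r x z) \<and>
     (\<forall>x\<in>B. \<forall>y\<in>B. x \<noteq> y \<longrightarrow> r x y \<or> r y x)"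

definition is_assignment ::
  "'a set \<Rightarrow> 'o set \<Rightarrow> 'o list set \<Rightarrow> ('a \<Rightarrow> 'o list \<Rightarrow> real) \<Rightarrow> bool" where
  "is_assignment N M B Q \<longleftrightarrow>
     (\<forall>j\<in>N. \<forall>x\<in>B. 0 \<le> Q j x \<and> Q j x \<le> 1) \<and>
     (\<forall>j\<in>N. (\<Sum>x\<in>B. Q j x) = 1) \<and>
     (\<forall>it\<in>M. (\<Sum>j\<in>N. \<Sum>x\<in>{x\<in>B. it \<in> set x}. Q j x) = 1)"

definition lex_dominates ::
  "'o list set \<Rightarrow> ('o list \<Rightarrow> 'o list \<Rightarrow> bool) \<Rightarrow> ('o list \<Rightarrow> real) \<Rightarrow> ('o list \<Rightarrow> real) \<Rightarrow> bool" where
  "lex_dominates B r p q \<longleftrightarrow>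
     (\<exists>x\<in>B. p x > q x \<and> (\<forall>y\<in>B. r y x \<longrightarrow> p y \<ge> q y))"

definition lexi_efficient ::
  "'a set \<Rightarrow> 'o set \<Rightarrow> 'o list set \<Rightarrow> ('a \<Rightarrow> 'o list \<Rightarrow> 'o list \<Rightarrow> bool)
     \<Rightarrow> ('a \<Rightarrow> 'o list \<Rightarrow> real) \<Rightarrow> bool" where
  "lexi_efficient N M B pr P \<longleftrightarrow>
     \<not> (\<exists>Q. is_assignment N M B Q \<and> (\<forall>j\<in>N. lex_dominates B (pr j) (Q j) (P j)))"

text \<open>s = remaining supply of each item.\<close>
definition available :: "'o list set \<Rightarrow> ('o \<Rightarrow> real) \<Rightarrow> 'o list \<Rightarrow> bool" where
  "available B s x \<longleftrightarrow> x \<in> B \<and> (\<forall>it\<in>set x. s it > 0)"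

definition top_bundle ::
  "'o list set \<Rightarrow> ('a \<Rightarrow> 'o list \<Rightarrow> 'o list \<Rightarrow> bool) \<Rightarrow> ('o \<Rightarrow> real) \<Rightarrow> 'a \<Rightarrow> 'o list" where
  "top_bundle B pr s j =
     (THE x. available B s x \<and> (\<forall>y. available B s y \<and> y \<noteq> x \<longrightarrow> pr j x y))"

definition eat_rate ::
  "'a set \<Rightarrow> 'o list set \<Rightarrow> ('a \<Rightarrow> 'o list \<Rightarrow> 'o list \<Rightarrow> bool) \<Rightarrow> ('o \<Rightarrow> real) \<Rightarrow> 'o \<Rightarrow> real" where
  "eat_rate N B pr s it = real (card {j\<in>N. it \<in> set (top_bundle B pr s j)})"

definition stage_length ::
  "'a set \<Rightarrow> 'o set \<Rightarrow> 'o list set \<Rightarrow> ('a \<Rightarrow> 'o list \<Rightarrow> 'o list \<Rightarrow> bool) \<Rightarrow> ('o \<Rightarrow> real) \<Rightarrow> real" where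
  "stage_length N M B pr s =
     Min {s it / eat_rate N B pr s it | it. it \<in> M \<and> eat_rate N B pr s it > 0}"

definition mps_step ::
  "'a set \<Rightarrow> 'o set \<Rightarrow> 'o list set \<Rightarrow> ('a \<Rightarrow> 'o list \<Rightarrow> 'o list \<Rightarrow> bool)
     \<Rightarrow> ('o \<Rightarrow> real) \<times> ('a \<Rightarrow> 'o list \<Rightarrow> real) \<Rightarrow> ('o \<Rightarrow> real) \<times> ('a \<Rightarrow> 'o list \<Rightarrow> real)" where
  "mps_step N M B pr st =
     (let s = fst st; P = snd st; d = stage_length N M B pr s in
       (\<lambda>it. s it - d * eat_rate N B pr s it,
        \<lambda>j x. P j x + (if j \<in> N \<and> x = top_bundle B pr s j then d else 0)))"

definition mps_continues ::
  "'a set \<Rightarrow> 'o set \<Rightarrow> 'o list set \<Rightarrow> ('a \<Rightarrow> 'o list \<Rightarrow> 'o list \<Rightarrow> bool) \<Rightarrow> ('o \<Rightarrow> real) \<Rightarrow> bool" where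
  "mps_continues N M B pr s \<longleftrightarrow>
     (\<exists>x. available B s x) \<and> {it\<in>M. eat_rate N B pr s it > 0} \<noteq> {}"

fun mps_iter ::
  "'a set \<Rightarrow> 'o set \<Rightarrow> 'o list set \<Rightarrow> ('a \<Rightarrow> 'o list \<Rightarrow> 'o list \<Rightarrow> bool) \<Rightarrow> nat
     \<Rightarrow> ('o \<Rightarrow> real) \<times> ('a \<Rightarrow> 'o list \<Rightarrow> real) \<Rightarrow> ('o \<Rightarrow> real) \<times> ('a \<Rightarrow> 'o list \<Rightarrow> real)" where
  "mps_iter N M B pr 0 st = st"
| "mps_iter N M B pr (Suc k) st =
     (if mps_continues N M B pr (fst st) then mps_iter N M B pr k (mps_step N M B pr st) else st)"

text \<open>Each stage exhausts at least one item of M, so card M stages suffice.\<close>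
definition MPS ::
  "'a set \<Rightarrow> 'o set \<Rightarrow> 'o list set \<Rightarrow> ('a \<Rightarrow> 'o list \<Rightarrow> 'o list \<Rightarrow> bool) \<Rightarrow> ('a \<Rightarrow> 'o list \<Rightarrow> real)" where
  "MPS N M B pr = snd (mps_iter N M B pr (card M) (\<lambda>_. 1, \<lambda>_ _. 0))"

end

theory Submission
  imports Defs
begin

text \<open>MPS runs in finitely many stages: in each, every agent eats her favourite available bundle,
  and the stage ends when some item runs out. Suppose Q lexicographically dominates MPS for every
  agent j, witnessed by a bundle x_j. Take an agent j0 whose witness becomes unavailable first,
  say at time k, and an item c of x_j0 exhausted by time k. Any bundle through c that MPS gives to
  an agent i was eaten before time k, while x_i was still available, so it is x_i or preferred to
  it, and Q gives i at least as much of it; for j0 the bundle x_j0 gives a strict inequality.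
  Summing over agents and bundles through c, Q would hand out more of c than MPS, which already
  hands out all of it.\<close>

lemma strict_linear_order_on_greatest:
  assumes "strict_linear_order_on B r" and "finite A" and "A \<noteq> {}" and "A \<subseteq> B"
  shows "\<exists>x\<in>A. \<forall>y\<in>A. y \<noteq> x \<longrightarrow> r x y"
  using assms(2-4)
proof (induction A rule: finite_ne_induct)
  case (singleton x)
  then show ?case by simp
next
  case (insert a F)
  then obtain x where x: "x \<in> F" "\<forall>y\<in>F. y \<noteq> x \<longrightarrow> r x y"
    by blast
  have "a \<in> B" "x \<in> B" "F \<subseteq> B" "a \<noteq> x"
    using insert x by auto
  then consider "r a x" | "r x a"
    using assms(1) unfolding strict_linear_order_on_def by blast
  then show ?case
  proof cases
    case 1
    then have "\<forall>y\<in>F. r a y"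
      using x \<open>a \<in> B\<close> \<open>x \<in> B\<close> \<open>F \<subseteq> B\<close> assms(1)
      unfolding strict_linear_order_on_def by (metis subsetD)
    then show ?thesis by blast
  next
    case 2
    then show ?thesis using x by blast
  qed
qed

lemma strict_linear_order_on_ex1_greatest:
  assumes "strict_linear_order_on B r" and "finite {x. P x}" and "\<exists>x. P x" and "\<And>x. P x \<Longrightarrow> x \<in> B"
  shows "\<exists>!x. P x \<and> (\<forall>y. P y \<and> y \<noteq> x \<longrightarrow> r x y)"
proof (rule ex_ex1I)
  have "\<exists>x\<in>{x. P x}. \<forall>y\<in>{x. P x}. y \<noteq> x \<longrightarrow> r x y"
    using assms by (intro strict_linear_order_on_greatest) auto
  then show "\<exists>x. P x \<and> (\<forall>y. P y \<and> y \<noteq> x \<longrightarrow> r x y)"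
    by auto
next
  fix x x'
  assume x: "P x \<and> (\<forall>y. P y \<and> y \<noteq> x \<longrightarrow> r x y)" and x': "P x' \<and> (\<forall>y. P y \<and> y \<noteq> x' \<longrightarrow> r x' y)"
  show "x = x'"
  proof (rule ccontr)
    assume "x \<noteq> x'"
    then have "r x x'" "r x' x" using x x' by auto
    moreover have "x \<in> B" "x' \<in> B" using x x' assms(4) by auto
    ultimately show False using assms(1) unfolding strict_linear_order_on_def by blast
  qed
qed

lemma top_bundle_greatest:
  assumes "strict_linear_order_on B (pr j)" and "finite B" and "available B s x"
  shows "available B s (top_bundle B pr s j)"
    and "available B s y \<Longrightarrow> y \<noteq> top_bundle B pr s j \<Longrightarrow> pr j (top_bundle B pr s j) y"
proof -
  have "{x. available B s x} \<subseteq> B" by (auto simp: available_def)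
  then have "\<exists>!t. available B s t \<and> (\<forall>y. available B s y \<and> y \<noteq> t \<longrightarrow> pr j t y)"
    using assms finite_subset by (intro strict_linear_order_on_ex1_greatest) auto
  from theI'[OF this] show "available B s (top_bundle B pr s j)"
    and "available B s y \<Longrightarrow> y \<noteq> top_bundle B pr s j \<Longrightarrow> pr j (top_bundle B pr s j) y"
    unfolding top_bundle_def by blast+
qed

lemma mps_iter_eq_funpow:
  "\<exists>K\<le>f. mps_iter N M B pr f st = (mps_step N M B pr ^^ K) st \<and>
     (\<forall>m<K. mps_continues N M B pr (fst ((mps_step N M B pr ^^ m) st))) \<and>
     (K = f \<or> \<not> mps_continues N M B pr (fst ((mps_step N M B pr ^^ K) st)))"
proof (induction f arbitrary: st)
  case 0
  then show ?case by auto
next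
  case (Suc f)
  let ?F = "mps_step N M B pr"
  show ?case
  proof (cases "mps_continues N M B pr (fst st)")
    case True
    obtain K where "K \<le> f" "mps_iter N M B pr f (?F st) = (?F ^^ K) (?F st)"
      "\<forall>m<K. mps_continues N M B pr (fst ((?F ^^ m) (?F st)))"
      "K = f \<or> \<not> mps_continues N M B pr (fst ((?F ^^ K) (?F st)))"
      using Suc.IH by blast
    moreover have "\<And>m. (?F ^^ m) (?F st) = (?F ^^ Suc m) st"
      by (simp add: funpow_Suc_right del: funpow.simps)
    ultimately show ?thesis
      using True by (intro exI[of _ "Suc K"]) (auto simp: less_Suc_eq_0_disj)
  next
    case False
    then show ?thesis by (intro exI[of _ 0]) auto
  qed
qed

locale mps_setting =
  fixes N :: "'a set" and M :: "'o set" and B :: "'o list set"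
    and pr :: "'a \<Rightarrow> 'o list \<Rightarrow> 'o list \<Rightarrow> bool"
  assumes finite_agents: "finite N" and agents_nonempty: "N \<noteq> {}"
    and finite_items: "finite M" and finite_bundles: "finite B"
    and bundle_items: "x \<in> B \<Longrightarrow> set x \<subseteq> M"
    and bundle_nonempty: "x \<in> B \<Longrightarrow> x \<noteq> []"
    and strict_preferences: "j \<in> N \<Longrightarrow> strict_linear_order_on B (pr j)"
begin

definition remaining :: "nat \<Rightarrow> 'o \<Rightarrow> real" where
  "remaining k = fst ((mps_step N M B pr ^^ k) (\<lambda>_. 1, \<lambda>_ _. 0))"

definition alloc :: "nat \<Rightarrow> 'a \<Rightarrow> 'o list \<Rightarrow> real" where
  "alloc k = snd ((mps_step N M B pr ^^ k) (\<lambda>_. 1, \<lambda>_ _. 0))"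

abbreviation eating :: "nat \<Rightarrow> 'a \<Rightarrow> 'o list" where
  "eating k j \<equiv> top_bundle B pr (remaining k) j"

abbreviation duration :: "nat \<Rightarrow> real" where
  "duration k \<equiv> stage_length N M B pr (remaining k)"

abbreviation rate :: "nat \<Rightarrow> 'o \<Rightarrow> real" where
  "rate k \<equiv> eat_rate N B pr (remaining k)"

lemma mps_state_eq: "(mps_step N M B pr ^^ k) (\<lambda>_. 1, \<lambda>_ _. 0) = (remaining k, alloc k)"
  by (simp add: remaining_def alloc_def)

lemma remaining_0 [simp]: "remaining 0 = (\<lambda>_. 1)"
  by (simp add: remaining_def)

lemma alloc_0 [simp]: "alloc 0 = (\<lambda>_ _. 0)"
  by (simp add: alloc_def)

lemma mps_state_Suc: "(remaining (Suc k), alloc (Suc k)) = mps_step N M B pr (remaining k, alloc k)"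
  by (simp add: remaining_def alloc_def)

lemma remaining_Suc: "remaining (Suc k) c = remaining k c - duration k * rate k c"
  using arg_cong[OF mps_state_Suc, of "\<lambda>st. fst st c"] by (simp add: mps_step_def Let_def)

lemma alloc_Suc:
  "alloc (Suc k) j x = alloc k j x + (if j \<in> N \<and> x = eating k j then duration k else 0)"
  using arg_cong[OF mps_state_Suc, of "\<lambda>st. snd st j x"] by (simp add: mps_step_def Let_def)

lemma allocated_bundle_was_eaten: "alloc k j x > 0 \<Longrightarrow> \<exists>m<k. x = eating m j"
proof (induction k)
  case (Suc k)
  then show ?case
    by (cases "j \<in> N \<and> x = eating k j") (auto simp: alloc_Suc less_Suc_eq)
qed simp

lemma bundle_has_item: "x \<in> B \<Longrightarrow> \<exists>c\<in>M. c \<in> set x"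
  using bundle_items bundle_nonempty by (metis last_in_set subsetD)

lemma eating_greatest:
  assumes "j \<in> N" and "available B (remaining k) x"
  shows "available B (remaining k) (eating k j)"
    and "available B (remaining k) y \<Longrightarrow> y \<noteq> eating k j \<Longrightarrow> pr j (eating k j) y"
  using top_bundle_greatest[of B pr j, OF strict_preferences[OF assms(1)] finite_bundles assms(2)]
  by blast+

lemma eaten_items_positive:
  assumes "available B (remaining k) x" and "rate k c > 0"
  shows "remaining k c > 0"
proof -
  have "{j\<in>N. c \<in> set (eating k j)} \<noteq> {}"
    using assms(2) by (auto simp: eat_rate_def card_gt_0_iff)
  then obtain j where "j \<in> N" "c \<in> set (eating k j)" by blast
  then show ?thesis
    using eating_greatest(1)[OF _ assms(1)] by (auto simp: available_def)
qed

lemma stage_exhausts_item: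
  assumes "mps_continues N M B pr (remaining k)"
  shows "duration k > 0" and "\<exists>c\<in>M. remaining k c > 0 \<and> remaining (Suc k) c = 0"
proof -
  let ?I = "{c \<in> M. rate k c > 0}"
  obtain x where x: "available B (remaining k) x"
    using assms by (auto simp: mps_continues_def)
  have "finite ((\<lambda>c. remaining k c / rate k c) ` ?I)" "?I \<noteq> {}"
    using finite_items assms by (auto simp: mps_continues_def)
  then have "duration k \<in> (\<lambda>c. remaining k c / rate k c) ` ?I"
    unfolding stage_length_def setcompr_eq_image by (intro Min_in) auto
  then obtain c where c: "c \<in> ?I" "duration k = remaining k c / rate k c"
    by blast
  moreover have "remaining k c > 0"
    using eaten_items_positive[OF x] c by blast
  ultimately show "duration k > 0" "\<exists>c\<in>M. remaining k c > 0 \<and> remaining (Suc k) c = 0"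
    by (auto simp: remaining_Suc)
qed

lemma allocated_amount_of_item:
  assumes "\<forall>m<k. \<exists>x. available B (remaining m) x"
  shows "(\<Sum>j\<in>N. \<Sum>x\<in>{x\<in>B. c \<in> set x}. alloc k j x) = 1 - remaining k c"
  using assms
proof (induction k)
  case 0
  then show ?case by simp
next
  case (Suc k)
  have "(\<Sum>x\<in>{x\<in>B. c \<in> set x}. if j \<in> N \<and> x = eating k j then duration k else 0)
        = (if c \<in> set (eating k j) then duration k else 0)" if "j \<in> N" for j
  proof -
    have "eating k j \<in> B"
      using Suc.prems eating_greatest(1)[OF that] by (auto simp: available_def)
    then show ?thesis using that finite_bundles by (simp add: sum.delta')
  qed
  then have "(\<Sum>j\<in>N. \<Sum>x\<in>{x\<in>B. c \<in> set x}. if j \<in> N \<and> x = eating k j then duration k else 0)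
      = (\<Sum>j\<in>N. if c \<in> set (eating k j) then duration k else 0)"
    by (rule sum.cong[OF refl])
  also have "\<dots> = (\<Sum>j\<in>{j\<in>N. c \<in> set (eating k j)}. duration k)"
    using finite_agents by (simp only: sum.inter_filter)
  also have "\<dots> = duration k * rate k c"
    by (simp add: eat_rate_def)
  finally show ?case
    using Suc by (simp add: alloc_Suc sum.distrib remaining_Suc)
qed

end

text \<open>K is the number of stages that mps_iter performs within its budget of card M iterations.\<close>
locale mps_run = mps_setting +
  fixes K :: nat
  assumes continues_before: "m < K \<Longrightarrow> mps_continues N M B pr (remaining m)"
    and stops: "K = card M \<or> \<not> mps_continues N M B pr (remaining K)"
begin

lemma remaining_antimono:
  assumes "a \<le> b" and "b \<le> K"
  shows "remaining b c \<le> remaining a c"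
  using assms
proof (induction b)
  case 0
  then show ?case by simp
next
  case (Suc b)
  show ?case
  proof (cases "a = Suc b")
    case False
    then have "remaining b c \<le> remaining a c"
      using Suc by simp
    moreover have "duration b > 0"
      using Suc.prems(2) continues_before stage_exhausts_item(1) by simp
    then have "remaining (Suc b) c \<le> remaining b c"
      by (simp add: remaining_Suc eat_rate_def)
    ultimately show ?thesis by linarith
  qed simp
qed

lemma card_unexhausted_items_le:
  assumes "k \<le> K"
  shows "card {c\<in>M. remaining k c > 0} + k \<le> card M"
  using assms
proof (induction k)
  case 0
  then show ?case using finite_items by (simp add: card_mono)
next
  case (Suc k)
  then have "k < K" by simp
  then obtain c where "c \<in> M" "remaining k c > 0" "remaining (Suc k) c = 0"
    using continues_before stage_exhausts_item(2) by blast
  then have "c \<in> {i\<in>M. remaining k i > 0} - {i\<in>M. remaining (Suc k) i > 0}"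
    by simp
  moreover have "{i\<in>M. remaining (Suc k) i > 0} \<subseteq> {i\<in>M. remaining k i > 0}"
    using remaining_antimono[of k "Suc k"] Suc.prems by (auto intro: less_le_trans)
  ultimately have "{i\<in>M. remaining (Suc k) i > 0} \<subset> {i\<in>M. remaining k i > 0}"
    unfolding psubset_eq by (metis Diff_cancel empty_iff)
  then have "card {i\<in>M. remaining (Suc k) i > 0} < card {i\<in>M. remaining k i > 0}"
    using finite_items by (simp add: psubset_card_mono)
  then show ?case using Suc by simp
qed

text \<open>If the run stops early, nobody eats any more, but every agent eats an available bundle
  as long as there is one.\<close>
lemma nothing_available_at_end: "\<not> available B (remaining K) x"
proof
  assume x: "available B (remaining K) x"
  then obtain c where c: "c \<in> M" "c \<in> set x"
    using bundle_has_item by (auto simp: available_def)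
  consider "K = card M" | "\<not> mps_continues N M B pr (remaining K)"
    using stops by blast
  then show False
  proof cases
    case 1
    then have "card {i\<in>M. remaining K i > 0} = 0"
      using card_unexhausted_items_le[of K] by simp
    then have "remaining K c \<le> 0"
      using finite_items c(1) by auto
    then show False using x c(2) by (auto simp: available_def)
  next
    case 2
    obtain j where j: "j \<in> N" using agents_nonempty by blast
    then have "eating K j \<in> B"
      using eating_greatest(1)[OF j x] by (simp add: available_def)
    then obtain i where "i \<in> M" "i \<in> set (eating K j)"
      using bundle_has_item by blast
    moreover have "rate K i > 0"
      using calculation(2) j finite_agents by (auto simp: eat_rate_def card_gt_0_iff)
    ultimately show False
      using 2 x unfolding mps_continues_def by blast
  qed
qed

definition lifetime where
  "lifetime x = (LEAST k. \<not> available B (remaining k) x)"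

lemma available_before_lifetime: "m < lifetime x \<Longrightarrow> available B (remaining m) x"
  unfolding lifetime_def by (rule not_less_Least[THEN notnotD])

lemma unavailable_at_lifetime: "\<not> available B (remaining (lifetime x)) x"
  unfolding lifetime_def by (rule LeastI_ex) (use nothing_available_at_end in blast)

lemma lifetime_le: "lifetime x \<le> K"
  unfolding lifetime_def using nothing_available_at_end by (rule Least_le)

lemma exhausted_item_fully_allocated:
  assumes "k \<le> K" and "remaining k c \<le> 0"
  shows "(\<Sum>j\<in>N. \<Sum>y\<in>{y\<in>B. c \<in> set y}. alloc K j y) \<ge> 1"
proof -
  have "(\<Sum>j\<in>N. \<Sum>y\<in>{y\<in>B. c \<in> set y}. alloc K j y) = 1 - remaining K c"
    using continues_before by (intro allocated_amount_of_item) (auto simp: mps_continues_def)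
  moreover have "remaining K c \<le> remaining k c"
    using assms(1) by (rule remaining_antimono) simp
  ultimately show ?thesis
    using assms(2) by linarith
qed

text \<open>The bundle y was eaten at a stage where c was not yet exhausted, hence before time k,
  when x was still available.\<close>
lemma eaten_bundle_preferred:
  assumes i: "i \<in> N" and "k \<le> lifetime x" and "c \<in> set y" and "remaining k c \<le> 0"
    and "alloc K i y > 0"
  shows "y = x \<or> pr i y x"
proof -
  obtain m where m: "m < K" "y = eating m i"
    using allocated_bundle_was_eaten assms(5) by blast
  obtain z where "available B (remaining m) z"
    using continues_before[OF m(1)] by (auto simp: mps_continues_def)
  note top = eating_greatest[OF i this]
  have "remaining m c > 0"
    using top(1) m(2) assms(3) by (simp add: available_def)
  moreover have "k \<le> K"
    using assms(2) lifetime_le order_trans by blast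
  ultimately have "m < lifetime x"
    using remaining_antimono[of k m c] assms(2,4) m(1) by linarith
  then show ?thesis
    using top(2)[OF available_before_lifetime] m(2) by blast
qed

lemma lexi_efficient_alloc: "lexi_efficient N M B pr (alloc K)"
  unfolding lexi_efficient_def
proof
  assume "\<exists>Q. is_assignment N M B Q \<and> (\<forall>j\<in>N. lex_dominates B (pr j) (Q j) (alloc K j))"
  then obtain Q where Q: "is_assignment N M B Q"
    and dominates: "\<forall>j\<in>N. \<exists>x. x \<in> B \<and> Q j x > alloc K j x \<and>
      (\<forall>y\<in>B. pr j y x \<longrightarrow> Q j y \<ge> alloc K j y)"
    unfolding lex_dominates_def by blast
  from bchoice[OF dominates] obtain X where "\<forall>j\<in>N. X j \<in> B \<and> Q j (X j) > alloc K j (X j) \<and>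
      (\<forall>y\<in>B. pr j y (X j) \<longrightarrow> Q j y \<ge> alloc K j y)"
    by blast
  then have X: "\<And>j. j \<in> N \<Longrightarrow> X j \<in> B \<and> Q j (X j) > alloc K j (X j) \<and>
      (\<forall>y\<in>B. pr j y (X j) \<longrightarrow> Q j y \<ge> alloc K j y)"
    by blast
  obtain j0 where j0: "j0 \<in> N" "\<And>j. j \<in> N \<Longrightarrow> lifetime (X j0) \<le> lifetime (X j)"
    using ex_has_least_nat[of "\<lambda>j. j \<in> N" _ "\<lambda>j. lifetime (X j)"] agents_nonempty by blast
  obtain c where c: "c \<in> set (X j0)" "remaining (lifetime (X j0)) c \<le> 0"
    using unavailable_at_lifetime[of "X j0"] X[OF j0(1)]
    unfolding available_def by (auto simp: not_less)
  let ?Y = "{y\<in>B. c \<in> set y}"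
  have alloc_le: "alloc K i y \<le> Q i y" if i: "i \<in> N" and y: "y \<in> ?Y" for i y
  proof (cases "alloc K i y > 0")
    case True
    then have "y = X i \<or> pr i y (X i)"
      using eaten_bundle_preferred[OF i j0(2)[OF i] _ c(2) True] y by blast
    then show ?thesis using X[OF i] y by force
  next
    case False
    then show ?thesis using Q i y unfolding is_assignment_def by force
  qed
  have "(\<Sum>j\<in>N. \<Sum>y\<in>?Y. alloc K j y) < (\<Sum>j\<in>N. \<Sum>y\<in>?Y. Q j y)"
  proof (rule sum_strict_mono_ex1[OF finite_agents])
    show "\<forall>j\<in>N. (\<Sum>y\<in>?Y. alloc K j y) \<le> (\<Sum>y\<in>?Y. Q j y)"
      using alloc_le by (intro ballI sum_mono) blast
    have "(\<Sum>y\<in>?Y. alloc K j0 y) < (\<Sum>y\<in>?Y. Q j0 y)"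
      using finite_bundles alloc_le[OF j0(1)] X[OF j0(1)] c(1)
      by (intro sum_strict_mono_ex1) auto
    then show "\<exists>j\<in>N. (\<Sum>y\<in>?Y. alloc K j y) < (\<Sum>y\<in>?Y. Q j y)"
      using j0(1) by blast
  qed
  moreover have "(\<Sum>j\<in>N. \<Sum>y\<in>?Y. alloc K j y) \<ge> 1"
    using lifetime_le c(2) by (rule exhausted_item_fully_allocated)
  moreover have "c \<in> M"
    using c(1) X[OF j0(1)] bundle_items by blast
  then have "(\<Sum>j\<in>N. \<Sum>y\<in>?Y. Q j y) = 1"
    using Q unfolding is_assignment_def by blast
  ultimately show False
    by linarith
qed

end

theorem theorem4:
  fixes N :: "'a set" and D :: "nat \<Rightarrow> 'o set" and n p :: nat
    and pr :: "'a \<Rightarrow> 'o list \<Rightarrow> 'o list \<Rightarrow> bool"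
  assumes "finite N" and "card N = n" and "n \<ge> 1" and "p \<ge> 1"
    and "\<And>i. i < p \<Longrightarrow> finite (D i) \<and> card (D i) = n"
    and "\<And>i k. i < p \<Longrightarrow> k < p \<Longrightarrow> i \<noteq> k \<Longrightarrow> D i \<inter> D k = {}"
    and "\<And>j. j \<in> N \<Longrightarrow> strict_linear_order_on (bundles p D) (pr j)"
  shows "lexi_efficient N (\<Union>i<p. D i) (bundles p D) pr
           (MPS N (\<Union>i<p. D i) (bundles p D) pr)"
proof -
  define M where "M = (\<Union>i<p. D i)"
  have items: "x \<in> bundles p D \<Longrightarrow> set x \<subseteq> M" for x
    by (force simp: M_def bundles_def in_set_conv_nth)
  have "finite M"
    using assms(5) by (auto simp: M_def)
  then have "finite (bundles p D)"
    using items by (intro finite_subset[OF _ finite_lists_length_eq[of M p]])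
      (auto simp: bundles_def)
  with assms(1-4,7) items interpret mps_setting N M "bundles p D" pr
    by unfold_locales (auto simp: bundles_def \<open>finite M\<close>)
  obtain K where "mps_iter N M (bundles p D) pr (card M) (\<lambda>_. 1, \<lambda>_ _. 0) = (remaining K, alloc K)"
    and "mps_run N M (bundles p D) pr K"
    using mps_iter_eq_funpow[of "card M" N M "bundles p D" pr "(\<lambda>_. 1, \<lambda>_ _. 0)"]
    by (auto simp: mps_state_eq mps_run_def mps_run_axioms_def mps_setting_axioms)
  then show ?thesis
    unfolding MPS_def M_def[symmetric] by (simp add: mps_run.lexi_efficient_alloc)
qed

end
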